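(* Let $n\ge2$, and let $\ell=(\ell_1,\dots,\ell_n)\in\mathbb C^n$ with $\sum_j\ell_j=0$ and $|\mathrm{Re}(\ell_j)|<\tfrac12$ for all $j$. For $\delta>0$ put $$\mathrm{LB}_\delta(\ell):=1-\frac{4\left(e^{\frac{n(n+6)}{4}\delta}-1\right)}{n(n+6)}\sum_{j=1}^n\left|\ell_j+\frac{n-2j+1}{2}\right|.$$ If $\delta>0$ is such that $\mathrm{LB}_\delta(\ell)>0$, then for every standard bump function $H_\delta$ one has $|\widehat{H_\delta}(\ell)|>\mathrm{LB}_\delta(\ell)$.
   Context: Iwasawa coordinates: $g=x\,a_{y_1,\dots,y_{n-1}}\,\xi$ with $x$ real upper triangular unipotent, $\xi\in SO(n,\mathbb R)$, $a_{y_1,\dots,y_{n-1}}=(\prod_jy_j^{n-j})^{-1/n}\mathrm{diag}(y_1\cdots y_{n-1},\dots,y_1,1)$. Set $\varphi_\ell(g)=\prod_{j=1}^{n-1}y_j^{\sum_{k=1}^{n-j}(\ell_k+\frac{n-2k+1}{2})}$ and $\beta_\ell(g)=\int_{SO(n,\mathbb R)}\varphi_\ell(\xi g)\,d\xi$ (normalized Haar measure). Polar height: $\sigma(g)=\|a\|$ where $g=\xi_1\mathrm{diag}(e^{a_1},\dots,e^{a_n})\xi_2$, $\xi_i\in SO(n,\mathbb R)$; $B_\delta=\{g\in SL(n,\mathbb R):\sigma(g)<\delta\}$. A standard bump function $H_\delta$ is a smooth compactly supported bi-$SO(n,\mathbb R)$-invariant function on $SL(n,\mathbb R)$ with $\mathrm{supp}\,H_\delta\subset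 B_\delta$, $H_\delta(g)=H_\delta(g^{-1})$, $H_\delta\ge0$, $\int_{SL(n,\mathbb R)}H_\delta\,dg=1$ (Haar measure). For a bi-$SO(n,\mathbb R)$-invariant compactly supported $k$, its spherical transform $\widehat k(\ell)$ is defined by $\beta_\ell*k=\widehat k(\ell)\beta_\ell$, where $(f*k)(g)=\int_{SL(n,\mathbb R)}f(gh^{-1})k(h)\,dh$; for $H_\delta$ this equals $\int H_\delta(g)\varphi_\ell(g)\,dg$. *)

theory Defs
  imports "HOL-Analysis.Analysis"
begin

text \<open>SL(n,R) is modelled on the type real^'n^'n of n x n real matrices,
  where the index type 'n is finite and linearly ordered; n = CARD('n).
  The rows/columns are numbered 1..n by their position in the order on 'n.\<close>

type_synonym 'n sqmat = "real^'n^'n"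

definition SLn :: "('n::finite) sqmat set" where
  "SLn = {g. det g = 1}"

definition SOn :: "('n::finite) sqmat set" where
  "SOn = {k. rotation_matrix k}"

definition pos :: "'n::{finite,linorder} \<Rightarrow> nat" where
  "pos i = card {k. k < i}"

definition upper_unipotent :: "('n::{finite,linorder}) sqmat \<Rightarrow> bool" where
  "upper_unipotent x \<longleftrightarrow> (\<forall>i. x $ i $ i = 1) \<and> (\<forall>i j. j < i \<longrightarrow> x $ i $ j = 0)"

text \<open>a_{y_1..y_{n-1}} = (prod_j y_j^(n-j))^(-1/n) diag(y_1...y_{n-1}, ..., y_1, 1);
  the diagonal entry in position p (0-based) is the product of y_1..y_{n-1-p}.\<close>
definition a_mat :: "(nat \<Rightarrow> real) \<Rightarrow> ('n::{finite,linorder}) sqmat" where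
  "a_mat y = (\<chi> i j. if i = j then
      (\<Prod>j\<in>{1..CARD('n)-1}. y j ^ (CARD('n) - j)) powr (-1 / real CARD('n))
        * (\<Prod>k\<in>{1..CARD('n) - 1 - pos i}. y k)
      else 0)"

definition iwasawa_y :: "('n::{finite,linorder}) sqmat \<Rightarrow> nat \<Rightarrow> real" where
  "iwasawa_y g = (SOME y. (\<forall>j\<in>{1..CARD('n)-1}. y j > 0)
       \<and> (\<forall>j. j \<notin> {1..CARD('n)-1} \<longrightarrow> y j = 1)
       \<and> (\<exists>x \<xi>. upper_unipotent x \<and> \<xi> \<in> SOn \<and> g = x ** (a_mat y :: 'n sqmat) ** \<xi>))"

text \<open>phi_l(g) = prod_{j=1}^{n-1} y_j^(sum_{k=1}^{n-j} (l_k + (n-2k+1)/2)).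
  l is given as a function on nat, of which l_1..l_n are used.\<close>
definition phi :: "(nat \<Rightarrow> complex) \<Rightarrow> ('n::{finite,linorder}) sqmat \<Rightarrow> complex" where
  "phi l g = (\<Prod>j\<in>{1..CARD('n)-1}.
      (complex_of_real (iwasawa_y g j)) powr
        (\<Sum>k\<in>{1..CARD('n)-j}. l k + complex_of_real ((real CARD('n) - 2 * real k + 1) / 2)))"

definition exp_diag :: "real^'n \<Rightarrow> ('n::finite) sqmat" where
  "exp_diag a = (\<chi> i j. if i = j then exp (a $ i) else 0)"

definition polar_height :: "('n::finite) sqmat \<Rightarrow> real" where
  "polar_height g = (SOME r. \<exists>\<xi>1 \<xi>2 a. \<xi>1 \<in> SOn \<and> \<xi>2 \<in> SOn
       \<and> g = \<xi>1 ** exp_diag a ** \<xi>2 \<and> r = norm a)"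

definition ball_SL :: "real \<Rightarrow> ('n::finite) sqmat set" where
  "ball_SL \<delta> = {g \<in> SLn. polar_height g < \<delta>}"

text \<open>C-infinity functions on a Euclidean space: all iterated partial derivatives exist.\<close>
coinductive smooth_fun :: "('a::euclidean_space \<Rightarrow> real) \<Rightarrow> bool" where
  "(\<forall>x. f differentiable (at x)) \<Longrightarrow>
   (\<forall>b\<in>Basis. smooth_fun (\<lambda>x. frechet_derivative f (at x) b)) \<Longrightarrow> smooth_fun f"

text \<open>Haar measures on SL(n,R): nonzero, locally finite, left-invariant Borel measures
  concentrated on the closed subset SL(n,R) of the matrix space.  (SL(n,R) is unimodular,
  and the quantity in the theorem does not depend on the normalization.)\<close>
definition haar_SL :: "('n::finite) sqmat measure \<Rightarrow> bool" where
  "haar_SL \<mu> \<longleftrightarrow> sets \<mu> = sets borel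
     \<and> emeasure \<mu> (UNIV - SLn) = 0
     \<and> emeasure \<mu> SLn > 0
     \<and> (\<forall>K. compact K \<longrightarrow> emeasure \<mu> K < \<infinity>)
     \<and> (\<forall>h\<in>SLn. \<forall>A\<in>sets borel. A \<subseteq> SLn \<longrightarrow>
            emeasure \<mu> ((\<lambda>g. h ** g) ` A) = emeasure \<mu> A)"

text \<open>Standard bump functions H_delta, as functions on SL(n,R) extended by 0.\<close>
definition standard_bump :: "('n::finite) sqmat measure \<Rightarrow> real \<Rightarrow> ('n sqmat \<Rightarrow> real) \<Rightarrow> bool" where
  "standard_bump \<mu> \<delta> H \<longleftrightarrow>
     (\<forall>g. g \<notin> SLn \<longrightarrow> H g = 0)
   \<and> (\<exists>F. smooth_fun F \<and> (\<forall>g\<in>SLn. F g = H g))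
   \<and> compact (closure {g \<in> SLn. H g \<noteq> 0})
   \<and> closure {g \<in> SLn. H g \<noteq> 0} \<subseteq> ball_SL \<delta>
   \<and> (\<forall>g\<in>SLn. \<forall>k1\<in>SOn. \<forall>k2\<in>SOn. H (k1 ** g ** k2) = H g)
   \<and> (\<forall>g\<in>SLn. \<forall>h\<in>SLn. g ** h = mat 1 \<longrightarrow> H h = H g)
   \<and> (\<forall>g. H g \<ge> 0)
   \<and> (\<integral>g. H g \<partial>\<mu>) = 1"

definition spherical_transform :: "('n::{finite,linorder}) sqmat measure \<Rightarrow> ('n sqmat \<Rightarrow> real)
     \<Rightarrow> (nat \<Rightarrow> complex) \<Rightarrow> complex" where
  "spherical_transform \<mu> H l = (\<integral>g. complex_of_real (H g) * phi l g \<partial>\<mu>)"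

definition LB :: "nat \<Rightarrow> real \<Rightarrow> (nat \<Rightarrow> complex) \<Rightarrow> real" where
  "LB n \<delta> l = 1 - 4 * (exp (real (n * (n + 6)) / 4 * \<delta>) - 1) / real (n * (n + 6))
      * (\<Sum>j\<in>{1..n}. cmod (l j + complex_of_real ((real n - 2 * real j + 1) / 2)))"

end

theory Submission
  imports Defs
begin

text \<open>
  For g in SL(n,R) write the Iwasawa diagonal part as d_1, ..., d_n.  Since
  \<Sum> \<ell>_j = 0, the normalizing scalar of a_y cancels and \<phi>_\<ell>(g) = exp w with
  w = \<Sum>_k (\<ell>_k + (n-2k+1)/2) ln d_k.  Comparing with a Cartan decomposition
  g = \<xi>1 exp(diag a) \<xi>2 gives |ln d_k| \<le> \<sigma>(g) = |a|, hence |w| and |Re w| are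
  controlled by \<sigma>(g) < \<delta> and |\<phi>_\<ell>(g) - 1| < 1 - LB_\<delta>(\<ell>) on the support of H_\<delta>.
  Averaging against the probability density H_\<delta> then gives |H_\<delta>^(\<ell>)| > LB_\<delta>(\<ell>).
\<close>

lemma matrix_vector_mult_inner_transpose:
  fixes A :: "real^'n^'m"
  shows "(A *v x) \<bullet> y = x \<bullet> (transpose A *v y)"
  by (simp add: dot_lmul_matrix[of y A x, symmetric] inner_commute)

lemma symmetric_matrix_inner:
  fixes S :: "real^'n^'n"
  assumes "transpose S = S"
  shows "(S *v x) \<bullet> y = x \<bullet> (S *v y)"
  using matrix_vector_mult_inner_transpose[of S x y] assms by simp

text \<open>An elementary real fact behind the first-order condition for a maximum:
  a linear function dominated by a quadratic one with no constant term vanishes.\<close>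
lemma linear_le_quadratic_imp_zero:
  fixes c L :: real
  assumes "\<And>e. 2 * e * c \<le> e^2 * L"
  shows "c = 0"
proof (rule ccontr)
  assume "c \<noteq> 0"
  define A where "A = \<bar>L\<bar> + 1"
  have A: "A > 0" "L < A" unfolding A_def by auto
  have "2 * (c / A) * c \<le> (c / A)^2 * L" by (rule assms)
  then have "2 * c^2 * A \<le> c^2 * L"
    using A by (simp add: power2_eq_square field_simps)
  moreover have "c^2 * L < c^2 * A" using A \<open>c \<noteq> 0\<close> by simp
  moreover have "c^2 * A < 2 * c^2 * A" using A \<open>c \<noteq> 0\<close> by simp
  ultimately show False by linarith
qed

lemma rayleigh_maximizer_eigenvector:
  fixes S :: "real^'n^'n"
  assumes symm: "transpose S = S" and W: "subspace W" and inv: "\<And>x. x \<in> W \<Longrightarrow> S *v x \<in> W"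
    and vW: "v \<in> W" and vn: "norm v = 1"
    and vmax: "\<And>u. u \<in> W \<Longrightarrow> norm u = 1 \<Longrightarrow> u \<bullet> (S *v u) \<le> v \<bullet> (S *v v)"
  shows "S *v v = (v \<bullet> (S *v v)) *\<^sub>R v"
proof -
  define q where "q x = x \<bullet> (S *v x)" for x
  have vv: "v \<bullet> v = 1" using vn by (simp add: norm_eq_1)
  have q_le: "q u \<le> q v * (u \<bullet> u)" if uW: "u \<in> W" for u
  proof (cases "u = 0")
    case False
    have "q (u /\<^sub>R norm u) \<le> q v"
      unfolding q_def using False uW W by (intro vmax) (auto simp: subspace_scale)
    moreover have "q (u /\<^sub>R norm u) = q u / (u \<bullet> u)"
      using False by (simp add: q_def matrix_vector_mult_scaleR power2_norm_eq_inner[symmetric]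
          power2_eq_square field_simps)
    ultimately show ?thesis using False by (simp add: divide_le_eq mult.commute)
  qed (simp add: q_def)
  have first_order: "w \<bullet> (S *v v) = 0" if wW: "w \<in> W" and wv: "w \<bullet> v = 0" for w
  proof (rule linear_le_quadratic_imp_zero)
    fix e :: real
    define z where "z = v + e *\<^sub>R w"
    have "q z = q v + 2 * e * (w \<bullet> (S *v v)) + e^2 * q w"
      unfolding q_def z_def using symmetric_matrix_inner[OF symm, of w v]
      by (simp add: inner_add_left inner_add_right matrix_vector_right_distrib
          matrix_vector_mult_scaleR inner_commute power2_eq_square algebra_simps)
    moreover have "z \<bullet> z = 1 + e^2 * (w \<bullet> w)"
      unfolding z_def using wv vv
      by (simp add: inner_add_left inner_add_right inner_commute[of v w] power2_eq_square)
    moreover have "q z \<le> q v * (z \<bullet> z)"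
      using q_le W wW vW by (simp add: z_def subspace_add subspace_scale)
    ultimately show "2 * e * (w \<bullet> (S *v v)) \<le> e^2 * (q v * (w \<bullet> w) - q w)"
      by (simp add: algebra_simps)
  qed
  define r where "r = S *v v - q v *\<^sub>R v"
  have "r \<in> W" unfolding r_def using W inv vW by (simp add: subspace_diff subspace_scale)
  moreover have rv: "r \<bullet> v = 0"
    unfolding r_def q_def inner_diff_left inner_scaleR_left vv by (simp add: inner_commute)
  ultimately have "r \<bullet> (S *v v) = 0" by (rule first_order)
  then have "r \<bullet> r = 0" using rv by (simp add: r_def inner_diff_right)
  then show ?thesis by (simp add: r_def q_def)
qed

text \<open>A symmetric matrix has a unit eigenvector orthogonal to any given set of fewer
  than n eigenvectors: maximize the quadratic form on the unit sphere of their
  orthogonal complement, which is nontrivial, compact and S-invariant.\<close>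
lemma symmetric_eigenvector_orthogonal_to:
  fixes S :: "real^'n^'n" and B :: "(real^'n) set"
  assumes symm: "transpose S = S" and fin: "finite B" and card: "card B < CARD('n)"
    and eig: "\<forall>b\<in>B. \<exists>\<mu>. S *v b = \<mu> *\<^sub>R b"
  shows "\<exists>v. norm v = 1 \<and> (\<forall>b\<in>B. orthogonal v b) \<and> (\<exists>\<mu>. S *v v = \<mu> *\<^sub>R v)"
proof -
  define W where "W = {x::real^'n. \<forall>b\<in>B. orthogonal x b}"
  define K where "K = W \<inter> sphere 0 1"
  have W: "subspace W" unfolding W_def subspace_def
    by (auto simp: orthogonal_clauses)
  have inv: "S *v x \<in> W" if "x \<in> W" for x
  proof -
    have "(S *v x) \<bullet> b = 0" if "b \<in> B" for b
    proof -
      obtain \<mu> where "S *v b = \<mu> *\<^sub>R b" using eig \<open>b \<in> B\<close> by blast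
      then show ?thesis using symmetric_matrix_inner[OF symm, of x b] \<open>x \<in> W\<close> \<open>b \<in> B\<close>
        by (simp add: W_def orthogonal_def)
    qed
    then show ?thesis by (simp add: W_def orthogonal_def)
  qed
  have "dim B < DIM(real^'n)" using dim_le_card[OF span_superset fin] card by simp
  then obtain x where "x \<noteq> 0" "\<And>y. y \<in> span B \<Longrightarrow> orthogonal x y"
    by (rule orthogonal_to_subspace_exists) auto
  then have "x /\<^sub>R norm x \<in> K"
    unfolding K_def W_def by (auto simp: span_base orthogonal_clauses)
  then have "K \<noteq> {}" by blast
  moreover have "compact K"
  proof -
    have "W = (\<Inter>b\<in>B. {x. b \<bullet> x = 0})"
      unfolding W_def by (auto simp: orthogonal_def inner_commute)
    then have "closed W" by (auto intro: closed_hyperplane)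
    then show ?thesis unfolding K_def by (simp add: closed_Int_compact)
  qed
  moreover have "continuous_on K (\<lambda>x. x \<bullet> (S *v x))"
    by (intro continuous_intros linear_continuous_on matrix_vector_mul_bounded_linear)
  ultimately obtain v where vK: "v \<in> K" and vmax: "\<forall>u\<in>K. u \<bullet> (S *v u) \<le> v \<bullet> (S *v v)"
    using continuous_attains_sup by blast
  have "S *v v = (v \<bullet> (S *v v)) *\<^sub>R v"
    by (rule rayleigh_maximizer_eigenvector[OF symm W inv]) (use vK vmax K_def in auto)
  then show ?thesis using vK unfolding K_def W_def by auto
qed

lemma symmetric_orthonormal_eigenvectors:
  fixes S :: "real^'n^'n"
  assumes symm: "transpose S = S" and "k \<le> CARD('n)"
  shows "\<exists>B. finite B \<and> card B = k \<and> (\<forall>b\<in>B. norm b = 1) \<and> pairwise orthogonal B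
      \<and> (\<forall>b\<in>B. \<exists>\<mu>. S *v b = \<mu> *\<^sub>R b)"
  using \<open>k \<le> CARD('n)\<close>
proof (induction k)
  case 0
  then show ?case by (intro exI[of _ "{}"]) auto
next
  case (Suc k)
  then obtain B where B: "finite B" "card B = k" "\<forall>b\<in>B. norm b = 1" "pairwise orthogonal B"
      "\<forall>b\<in>B. \<exists>\<mu>. S *v b = \<mu> *\<^sub>R b" by auto
  obtain v where v: "norm v = 1" "\<forall>b\<in>B. orthogonal v b" "\<exists>\<mu>. S *v v = \<mu> *\<^sub>R v"
    using symmetric_eigenvector_orthogonal_to[OF symm B(1) _ B(5)] B(2) Suc.prems by auto
  have "v \<notin> B"
    using v(1,2) by (auto simp: orthogonal_def norm_eq_1)
  moreover have "pairwise orthogonal (insert v B)"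
    using B(4) v(2) by (auto simp: pairwise_insert orthogonal_commute)
  ultimately show ?case
    using B v by (intro exI[of _ "insert v B"]) auto
qed

lemma symmetric_orthogonal_eigenbasis:
  fixes S :: "real^'n^'n"
  assumes symm: "transpose S = S"
  shows "\<exists>Q. orthogonal_matrix Q \<and> (\<forall>j. \<exists>\<mu>. S *v column j Q = \<mu> *\<^sub>R column j Q)"
proof -
  obtain B where B: "finite B" "card B = CARD('n)" "\<forall>b\<in>B. norm b = 1" "pairwise orthogonal B"
      "\<forall>b\<in>B. \<exists>\<mu>. S *v b = \<mu> *\<^sub>R b"
    using symmetric_orthonormal_eigenvectors[OF symm, of "CARD('n)"] by auto
  obtain f where f: "bij_betw f (UNIV::'n set) B"
    using finite_same_card_bij[of "UNIV::'n set" B] B(1,2) by auto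
  define Q :: "real^'n^'n" where "Q = (\<chi> i j. f j $ i)"
  have col: "column j Q = f j" for j unfolding Q_def column_def by (simp add: vec_eq_iff)
  have fB: "f j \<in> B" for j using f by (auto simp: bij_betw_def)
  have finj: "f i \<noteq> f j" if "i \<noteq> j" for i j using f that by (auto simp: bij_betw_def inj_on_def)
  have "orthogonal_matrix Q" unfolding orthogonal_matrix_orthonormal_columns col
    using B(3,4) fB finj by (auto simp: pairwise_def)
  then show ?thesis using B(5) fB col by metis
qed

definition diagm :: "('n::finite \<Rightarrow> real) \<Rightarrow> real^'n^'n" where
  "diagm d = (\<chi> i j. if i = j then d i else 0)"

lemma diagm_nth [simp]: "diagm d $ i $ j = (if i = j then d i else 0)"
  by (simp add: diagm_def)

lemma column_mult_diagm: "column j (A ** diagm d) = d j *\<^sub>R column j A"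
  by (simp add: column_def matrix_matrix_mult_def vec_eq_iff if_distrib mult.commute cong: if_cong)

lemma diagm_mult_diagm: "diagm d ** diagm e = diagm (\<lambda>i. d i * e i)"
proof -
  have "(\<Sum>k\<in>UNIV. diagm d $ i $ k * diagm e $ k $ j) = (\<Sum>k\<in>UNIV. if k = i then d i * diagm e $ i $ j else 0)"
    for i j by (rule sum.cong) auto
  then show ?thesis by (simp add: matrix_matrix_mult_def vec_eq_iff)
qed

lemma det_diagm: "det (diagm d) = prod d UNIV"
  by (simp add: det_diagonal)

lemma transpose_diagm [simp]: "transpose (diagm d) = diagm d"
  by (simp add: transpose_def vec_eq_iff)

lemma diagm_mult_vector_nth: "(diagm d *v z) $ k = d k * z $ k"
proof -
  have "(\<Sum>j\<in>UNIV. diagm d $ k $ j * z $ j) = (\<Sum>j\<in>UNIV. if j = k then d k * z $ k else 0)"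
    by (rule sum.cong) auto
  then show ?thesis by (simp add: matrix_vector_mult_def)
qed

lemma diagm_axis: "diagm d *v axis i c = axis i (d i * c)"
  by (simp add: vec_eq_iff diagm_mult_vector_nth axis_def)

lemma exp_diag_diagm: "exp_diag a = diagm (\<lambda>k. exp (a $ k))"
  by (simp add: exp_diag_def diagm_def)

text \<open>The eigenbasis can be chosen in SO(n): flip the sign of one column if needed.\<close>
lemma symmetric_rotation_eigenbasis:
  fixes S :: "real^'n^'n"
  assumes symm: "transpose S = S"
  shows "\<exists>Q. rotation_matrix Q \<and> (\<forall>j. \<exists>\<mu>. S *v column j Q = \<mu> *\<^sub>R column j Q)"
proof -
  obtain Q where Q: "orthogonal_matrix Q" "\<forall>j. \<exists>\<mu>. S *v column j Q = \<mu> *\<^sub>R column j Q"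
    using symmetric_orthogonal_eigenbasis[OF symm] by blast
  show ?thesis
  proof (cases "det Q = 1")
    case True then show ?thesis using Q by (auto simp: rotation_matrix_def)
  next
    case False
    then have dQ: "det Q = -1" using det_orthogonal_matrix[OF Q(1)] by auto
    obtain j0 :: 'n where True by simp
    define d where "d i = (if i = j0 then -1 else 1::real)" for i
    define Q' where "Q' = Q ** diagm d"
    have "orthogonal_matrix (diagm d)"
      unfolding orthogonal_matrix transpose_diagm diagm_mult_diagm
      by (simp add: d_def vec_eq_iff mat_def)
    then have oQ': "orthogonal_matrix Q'" unfolding Q'_def using Q(1) orthogonal_matrix_mul by blast
    have "prod d UNIV = d j0 * prod d (UNIV - {j0})" by (simp add: prod.remove)
    also have "prod d (UNIV - {j0}) = 1" by (rule prod.neutral) (simp add: d_def)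
    finally have "det Q' = 1" unfolding Q'_def det_mul det_diagm dQ by (simp add: d_def)
    moreover have "\<exists>\<mu>. S *v column j Q' = \<mu> *\<^sub>R column j Q'" for j
      using Q(2) unfolding Q'_def column_mult_diagm by (metis matrix_vector_mult_scaleR scaleR_left_commute)
    ultimately show ?thesis using oQ' by (auto simp: rotation_matrix_def)
  qed
qed

lemma orthogonal_matrix_norm:
  fixes Q :: "real^'n^'n"
  assumes "orthogonal_matrix Q"
  shows "norm (Q *v x) = norm x"
proof -
  have "(Q *v x) \<bullet> (Q *v x) = x \<bullet> x"
    using assms by (simp add: matrix_vector_mult_inner_transpose matrix_vector_mul_assoc
        orthogonal_matrix_def)
  then show ?thesis by (metis norm_eq_sqrt_inner)
qed

lemma det_nonzero_kernel:
  fixes g :: "real^'n^'n"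
  assumes "det g \<noteq> 0" and "g *v x = 0"
  shows "x = 0"
  using assms invertible_det_nz invertible_left_inverse matrix_left_invertible_ker by metis

lemma orthogonal_columns_factorization:
  fixes A :: "real^'n^'n"
  assumes nz: "\<And>j. column j A \<noteq> 0"
    and orth: "\<And>i j. i \<noteq> j \<Longrightarrow> column i A \<bullet> column j A = 0"
  obtains U where "orthogonal_matrix U" "A = U ** diagm (\<lambda>j. norm (column j A))"
proof -
  define s where "s j = norm (column j A)" for j
  have spos: "s j > 0" for j using nz[of j] by (simp add: s_def)
  define U where "U = A ** diagm (\<lambda>j. 1 / s j)"
  have colU: "column j U = (1 / s j) *\<^sub>R column j A" for j
    unfolding U_def by (rule column_mult_diagm)
  have "orthogonal_matrix U"
    unfolding orthogonal_matrix_orthonormal_columns colU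
    using nz orth by (auto simp: s_def orthogonal_def)
  moreover have "diagm (\<lambda>j. 1 / s j) ** diagm s = mat 1"
    unfolding diagm_mult_diagm using spos by (simp add: vec_eq_iff mat_def less_imp_neq[symmetric])
  then have "A = U ** diagm s" unfolding U_def by (simp add: matrix_mul_assoc[symmetric])
  ultimately show ?thesis using that unfolding s_def by blast
qed

text \<open>Take an eigenbasis Q \<in> SO(n) of g^T g; the columns of g Q are then pairwise orthogonal,
  so g Q = U D with U orthogonal and D positive diagonal, and det U = 1.\<close>
lemma cartan_decomposition:
  fixes g :: "real^'n^'n"
  assumes dg: "det g = 1"
  shows "\<exists>\<xi>1 \<xi>2 a. \<xi>1 \<in> SOn \<and> \<xi>2 \<in> SOn \<and> g = \<xi>1 ** exp_diag a ** \<xi>2"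
proof -
  define S where "S = transpose g ** g"
  have symm: "transpose S = S" unfolding S_def by (simp add: matrix_transpose_mul)
  obtain Q where Q: "rotation_matrix Q" "\<forall>j. \<exists>\<mu>. S *v column j Q = \<mu> *\<^sub>R column j Q"
    using symmetric_rotation_eigenbasis[OF symm] by blast
  have oQ: "orthogonal_matrix Q" using Q(1) by (simp add: rotation_matrix_def)
  have colQ: "column i Q \<bullet> column j Q = (if i = j then 1 else 0)" for i j
    using oQ unfolding orthogonal_matrix_orthonormal_columns
    by (auto simp: orthogonal_def norm_eq_1)
  have colgQ: "column j (g ** Q) = g *v column j Q" for j
    by (simp add: column_def matrix_matrix_mult_def matrix_vector_mult_def vec_eq_iff)
  have "column j (g ** Q) \<noteq> 0" for j
  proof
    assume "column j (g ** Q) = 0"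
    then have "column j Q = 0" using det_nonzero_kernel[of g] dg unfolding colgQ by simp
    then show False using colQ[of j j] by simp
  qed
  moreover have "column i (g ** Q) \<bullet> column j (g ** Q) = 0" if "i \<noteq> j" for i j
  proof -
    obtain \<mu> where "S *v column j Q = \<mu> *\<^sub>R column j Q" using Q(2) by blast
    moreover have "(g *v column i Q) \<bullet> (g *v column j Q) = column i Q \<bullet> (S *v column j Q)"
      unfolding S_def by (simp add: matrix_vector_mult_inner_transpose matrix_vector_mul_assoc)
    ultimately show ?thesis unfolding colgQ using colQ[of i j] that by simp
  qed
  ultimately obtain U where oU: "orthogonal_matrix U"
    and gQ: "g ** Q = U ** diagm (\<lambda>j. norm (column j (g ** Q)))"
    by (rule orthogonal_columns_factorization)
  define s where "s j = norm (column j (g ** Q))" for j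
  have spos: "s j > 0" for j using \<open>\<And>j. column j (g ** Q) \<noteq> 0\<close> by (simp add: s_def)
  have "g = (g ** Q) ** transpose Q"
    using oQ by (simp add: orthogonal_matrix_def matrix_mul_assoc[symmetric])
  then have geq: "g = U ** diagm s ** transpose Q" using gQ by (simp add: s_def[abs_def])
  have "det U * prod s UNIV = 1"
    using dg Q(1) unfolding geq det_mul det_diagm by (simp add: rotation_matrix_def)
  moreover have "prod s UNIV > 0" using spos by (simp add: prod_pos)
  ultimately have "det U = 1" using det_orthogonal_matrix[OF oU] by (auto simp: zero_less_mult_iff)
  then have "U \<in> SOn" using oU by (simp add: SOn_def rotation_matrix_def)
  moreover have "transpose Q \<in> SOn" using Q(1) by (simp add: SOn_def rotation_matrix_def)
  moreover have "exp_diag (\<chi> j. ln (s j)) = diagm s"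
    using spos by (simp add: exp_diag_def diagm_def vec_eq_iff)
  ultimately show ?thesis using geq by metis
qed

lemma polar_height_decomposition:
  fixes g :: "real^'n^'n"
  assumes "det g = 1"
  obtains \<xi>1 \<xi>2 a where "\<xi>1 \<in> SOn" "\<xi>2 \<in> SOn" "g = \<xi>1 ** exp_diag a ** \<xi>2"
    "polar_height g = norm a"
proof -
  have "\<exists>r \<xi>1 \<xi>2 a. \<xi>1 \<in> SOn \<and> \<xi>2 \<in> SOn \<and> g = \<xi>1 ** exp_diag a ** \<xi>2 \<and> r = norm a"
    using cartan_decomposition[OF assms] by blast
  then have "\<exists>\<xi>1 \<xi>2 a. \<xi>1 \<in> SOn \<and> \<xi>2 \<in> SOn \<and> g = \<xi>1 ** exp_diag a ** \<xi>2
      \<and> polar_height g = norm a"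
    unfolding polar_height_def by (rule someI_ex)
  then show ?thesis using that by blast
qed

text \<open>A permutation of a finite linear order that moves no element downwards is the
  identity (look at the largest moved element).\<close>
lemma permutation_ge_id:
  fixes p :: "'n::{finite,linorder} \<Rightarrow> 'n"
  assumes p: "p permutes UNIV" and ge: "\<And>i. i \<le> p i"
  shows "p = id"
proof (rule ccontr)
  assume "p \<noteq> id"
  then have ne: "{i. p i \<noteq> i} \<noteq> {}" by (auto simp: fun_eq_iff)
  define m where "m = Max {i. p i \<noteq> i}"
  have mD: "p m \<noteq> m" using Max_in[OF _ ne] unfolding m_def by auto
  then have "m < p m" using ge by (simp add: order.not_eq_order_implies_strict)
  have "p (p m) \<noteq> p m" using mD p by (metis permutes_inj injD)
  then have "p m \<le> m" unfolding m_def by (intro Max_ge) auto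
  then show False using \<open>m < p m\<close> by simp
qed

text \<open>The determinant of an upper triangular matrix over a finite linear order is the
  product of its diagonal (the library version requires a well-ordered index type).\<close>
lemma det_upper_triangular:
  fixes A :: "'a::comm_ring_1^('n::{finite,linorder})^('n::{finite,linorder})"
  assumes ld: "\<And>i j. j < i \<Longrightarrow> A$i$j = 0"
  shows "det A = prod (\<lambda>i. A$i$i) UNIV"
proof -
  have "of_int (sign p) * prod (\<lambda>i. A$i$p i) UNIV = 0" if p: "p permutes UNIV" "p \<noteq> id" for p
  proof -
    obtain i where "p i < i" using permutation_ge_id[OF p(1)] p(2) by (meson not_le)
    then have "\<exists>i\<in>UNIV. A $ i $ p i = 0" using ld by blast
    then show ?thesis by (simp add: prod_zero)
  qed
  then have "det A = (\<Sum>p\<in>{id}. of_int (sign p) * prod (\<lambda>i. A$i$p i) UNIV)"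
    unfolding det_def by (intro sum.mono_neutral_right) (auto simp: permutes_id finite_permutations)
  then show ?thesis by (simp add: sign_id)
qed

lemma det_upper_unipotent:
  assumes "upper_unipotent x"
  shows "det x = 1"
  using assms det_upper_triangular[of x] by (simp add: upper_unipotent_def)

lemma mult_transpose_nth: "(A ** transpose B) $ i $ j = row i A \<bullet> row j B"
  for A B :: "real^'n^'m"
  by (simp add: matrix_matrix_mult_def transpose_def row_def inner_vec_def mult.commute)

lemma row_not_in_span_of_rows:
  fixes g :: "real^'n^'n"
  assumes dg: "det g \<noteq> 0" and "i \<notin> J"
  shows "row i g \<notin> span ((\<lambda>j. row j g) ` J)"
proof
  assume ri: "row i g \<in> span ((\<lambda>j. row j g) ` J)"
  show False
  proof (cases "\<exists>j\<in>J. row j g = row i g")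
    case True
    then show False using det_identical_rows[of i _ g] dg \<open>i \<notin> J\<close> by metis
  next
    case False
    then have "(\<lambda>j. row j g) ` J \<subseteq> rows g - {row i g}"
      by (auto simp: rows_def)
    then have "row i g \<in> span (rows g - {row i g})" using ri by (meson span_mono subsetD)
    moreover have "row i g \<in> rows g" by (auto simp: rows_def)
    ultimately have "dependent (rows g)" unfolding dependent_def by blast
    then show False using dg by (simp add: det_dependent_rows dependent_vec_eq)
  qed
qed

text \<open>Gram-Schmidt from the bottom row upwards: the rows of an invertible matrix can be
  orthogonalized so that u i is row i minus a combination of the later rows.  We record
  only the inner products needed for the RQ decomposition.\<close>
lemma orthogonalize_rows:
  fixes g :: "real^('n::{finite,linorder})^('n::{finite,linorder})"
  assumes dg: "det g \<noteq> 0"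
  obtains u where "\<And>i. u i \<noteq> 0" "\<And>i j. i \<noteq> j \<Longrightarrow> u i \<bullet> u j = 0"
    "\<And>i j. j < i \<Longrightarrow> row i g \<bullet> u j = 0" "\<And>i. row i g \<bullet> u i = u i \<bullet> u i"
proof -
  define Sp where "Sp i = span ((\<lambda>j. row j g) ` {j. i < j})" for i
  have "\<exists>u. row i g - u \<in> Sp i \<and> (\<forall>w\<in>Sp i. orthogonal u w)" for i
  proof -
    obtain y z where "y \<in> Sp i" "\<And>w. w \<in> Sp i \<Longrightarrow> orthogonal z w" "row i g = y + z"
      using orthogonal_subspace_decomp_exists[of "(\<lambda>j. row j g) ` {j. i < j}" "row i g"]
      unfolding Sp_def by metis
    then show ?thesis by (intro exI[of _ z]) auto
  qed
  then obtain u where u1: "\<And>i. row i g - u i \<in> Sp i"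
    and u2: "\<And>i w. w \<in> Sp i \<Longrightarrow> orthogonal (u i) w"
    by metis
  have rowSp: "row j g \<in> Sp i" if "i < j" for i j
    unfolding Sp_def using that by (intro span_base) auto
  have uSp: "u j \<in> Sp i" if "i < j" for i j
  proof -
    have "Sp j \<subseteq> Sp i" unfolding Sp_def using that by (intro span_mono) auto
    then have "row j g - u j \<in> Sp i" using u1[of j] by blast
    then show ?thesis using rowSp[OF that] span_diff unfolding Sp_def by force
  qed
  have "u i \<noteq> 0" for i
    using u1[of i] row_not_in_span_of_rows[OF dg, of i "{j. i < j}"] unfolding Sp_def by auto
  moreover have "u i \<bullet> u j = 0" if "i \<noteq> j" for i j
    using that u2[OF uSp[of i j]] u2[OF uSp[of j i]]
    by (cases "i < j") (auto simp: orthogonal_def inner_commute)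
  moreover have "row i g \<bullet> u j = 0" if "j < i" for i j
    using u2[OF rowSp[OF that]] by (simp add: orthogonal_def inner_commute)
  moreover have "row i g \<bullet> u i = u i \<bullet> u i" for i
    using u2[OF u1[of i]] unfolding orthogonal_def inner_diff_right by (simp add: inner_commute)
  ultimately show ?thesis by (rule that)
qed

text \<open>RQ decomposition: an invertible matrix is an upper triangular matrix with positive
  diagonal times an orthogonal matrix (whose rows are the normalized u i).\<close>
lemma rq_decomposition:
  fixes g :: "real^('n::{finite,linorder})^('n::{finite,linorder})"
  assumes dg: "det g \<noteq> 0"
  obtains T \<xi> where "orthogonal_matrix \<xi>" "\<And>i j. j < i \<Longrightarrow> T $ i $ j = 0"
    "\<And>i. T $ i $ i > 0" "g = T ** \<xi>"
proof -
  obtain u where u0: "\<And>i. u i \<noteq> 0" and uorth: "\<And>i j. i \<noteq> j \<Longrightarrow> u i \<bullet> u j = 0"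
    and low: "\<And>i j. j < i \<Longrightarrow> row i g \<bullet> u j = 0" and diag: "\<And>i. row i g \<bullet> u i = u i \<bullet> u i"
    using orthogonalize_rows[OF dg] by blast
  define \<xi> where "\<xi> = (\<chi> i. u i /\<^sub>R norm (u i))"
  have row\<xi>: "row i \<xi> = u i /\<^sub>R norm (u i)" for i unfolding \<xi>_def row_def by (simp add: vec_eq_iff)
  have o\<xi>: "orthogonal_matrix \<xi>" unfolding orthogonal_matrix_orthonormal_rows row\<xi>
    using u0 uorth by (auto simp: orthogonal_def)
  define T where "T = g ** transpose \<xi>"
  have Tnth: "T $ i $ j = (row i g \<bullet> u j) / norm (u j)" for i j
    unfolding T_def mult_transpose_nth row\<xi> by (simp add: divide_inverse mult.commute)
  have "T $ i $ j = 0" if "j < i" for i j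
    unfolding Tnth using low[OF that] by simp
  moreover have "T $ i $ i > 0" for i
    unfolding Tnth diag using u0[of i] by (simp add: inner_gt_zero_iff)
  moreover have "g = T ** \<xi>" unfolding T_def using o\<xi>
    by (simp add: orthogonal_matrix_def matrix_mul_assoc[symmetric])
  ultimately show ?thesis by (rule that[OF o\<xi>])
qed

lemma iwasawa_decomposition_diagonal:
  fixes g :: "real^('n::{finite,linorder})^('n::{finite,linorder})"
  assumes dg: "det g = 1"
  obtains x d \<xi> where "upper_unipotent x" "\<xi> \<in> SOn" "\<And>i. d i > 0" "g = x ** diagm d ** \<xi>"
proof -
  have "det g \<noteq> 0" using dg by simp
  then obtain T \<xi> where o\<xi>: "orthogonal_matrix \<xi>" and Tlow: "\<And>i j. j < i \<Longrightarrow> T $ i $ j = 0"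
    and Tpos: "\<And>i. T $ i $ i > 0" and gT: "g = T ** \<xi>"
    by (rule rq_decomposition) auto
  define d where "d i = T $ i $ i" for i
  define x where "x = T ** diagm (\<lambda>i. 1 / d i)"
  have dpos: "d i > 0" for i unfolding d_def by (rule Tpos)
  have "diagm (\<lambda>i. 1 / d i) ** diagm d = mat 1"
    unfolding diagm_mult_diagm using dpos by (simp add: vec_eq_iff mat_def less_imp_neq[symmetric])
  then have xd: "x ** diagm d = T" unfolding x_def by (simp add: matrix_mul_assoc[symmetric])
  have xnth: "x $ i $ j = T $ i $ j / d j" for i j
    unfolding x_def by (simp add: matrix_matrix_mult_def if_distrib cong: if_cong)
  have ux: "upper_unipotent x"
    unfolding upper_unipotent_def xnth using Tlow dpos by (auto simp: d_def less_imp_neq[symmetric])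
  have geq: "g = x ** diagm d ** \<xi>" using gT xd by simp
  have "1 = prod d UNIV * det \<xi>" using dg unfolding geq det_mul det_upper_unipotent[OF ux] det_diagm
    by simp
  moreover have "prod d UNIV > 0" using dpos by (simp add: prod_pos)
  ultimately have "det \<xi> = 1" using det_orthogonal_matrix[OF o\<xi>] by auto
  then have "\<xi> \<in> SOn" using o\<xi> by (simp add: SOn_def rotation_matrix_def)
  then show ?thesis using ux dpos geq that by blast
qed

lemma pos_strict_mono:
  fixes i j :: "'n::{finite,linorder}"
  assumes "i < j"
  shows "pos i < pos j"
proof -
  have "{k. k < i} \<subset> {k. k < j}" using assms by auto
  then show ?thesis unfolding pos_def by (intro psubset_card_mono) auto
qed

lemma pos_less_card: "pos (i :: 'n::{finite,linorder}) < CARD('n)"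
  unfolding pos_def by (rule psubset_card_mono) auto

lemma pos_bij: "bij_betw (pos :: 'n::{finite,linorder} \<Rightarrow> nat) UNIV {..<CARD('n)}"
proof -
  have inj: "inj (pos :: 'n \<Rightarrow> nat)"
    by (metis injI linorder_neqE_nat not_less_iff_gr_or_eq pos_strict_mono)
  then have "card (pos ` (UNIV::'n set)) = CARD('n)" by (simp add: card_image)
  moreover have "pos ` (UNIV::'n set) \<subseteq> {..<CARD('n)}" using pos_less_card by auto
  ultimately have "pos ` (UNIV::'n set) = {..<CARD('n)}" by (intro card_subset_eq) auto
  then show ?thesis using inj by (simp add: bij_betw_def)
qed

definition pos_index :: "nat \<Rightarrow> 'n::{finite,linorder}" where
  "pos_index p = inv pos p"

lemma pos_pos_index [simp]: "p < CARD('n::{finite,linorder}) \<Longrightarrow> pos (pos_index p :: 'n) = p"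
  unfolding pos_index_def using pos_bij[where 'n='n] by (metis bij_betw_inv_into_right lessThan_iff)

lemma pos_index_pos [simp]: "pos_index (pos i) = i"
  unfolding pos_index_def by (rule inv_f_f) (metis bij_betw_imp_inj_on pos_bij)

lemma prod_pos_index: "(\<Prod>p<CARD('n::{finite,linorder}). f (pos_index p :: 'n)) = prod f UNIV"
  using prod.reindex_bij_betw[OF pos_bij[where 'n='n], of "\<lambda>p. f (pos_index p)"] by simp

definition a_scale :: "nat \<Rightarrow> (nat \<Rightarrow> real) \<Rightarrow> real" where
  "a_scale N y = (\<Prod>j\<in>{1..N-1}. y j ^ (N - j)) powr (-1 / real N)"

lemma a_mat_diagm:
  "(a_mat y :: ('n::{finite,linorder}) sqmat)
     = diagm (\<lambda>i. a_scale CARD('n) y * (\<Prod>k\<in>{1..CARD('n) - 1 - pos i}. y k))"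
  unfolding a_mat_def diagm_def a_scale_def by (rule refl)

lemma prod_power_triangle:
  fixes f :: "nat \<Rightarrow> real"
  shows "(\<Prod>j\<in>{1..N-1}. f j ^ (N - j)) = (\<Prod>p<N. \<Prod>k\<in>{1..N-1-p}. f k)"
proof (induction N)
  case 0 then show ?case by simp
next
  case (Suc N)
  have "(\<Prod>p<Suc N. \<Prod>k\<in>{1..Suc N-1-p}. f k) = (\<Prod>k\<in>{1..N}. f k) * (\<Prod>p<N. \<Prod>k\<in>{1..N-1-p}. f k)"
    by (subst prod.lessThan_Suc_shift) simp
  also have "\<dots> = (\<Prod>k\<in>{1..N}. f k) * (\<Prod>j\<in>{1..N-1}. f j ^ (N - j))" using Suc.IH by simp
  also have "(\<Prod>j\<in>{1..N-1}. f j ^ (N - j)) = (\<Prod>j\<in>{1..N}. f j ^ (N - j))"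
  proof (cases N)
    case (Suc M)
    then have "{1..N} = insert N {1..N-1}" by auto
    then show ?thesis using Suc by simp
  qed simp
  also have "(\<Prod>k\<in>{1..N}. f k) * (\<Prod>j\<in>{1..N}. f j ^ (N - j)) = (\<Prod>j\<in>{1..N}. f j ^ (Suc N - j))"
    by (subst prod.distrib[symmetric]) (rule prod.cong, auto simp: Suc_diff_le)
  finally show ?case by simp
qed

lemma prod_ratio_telescope:
  fixes D y :: "nat \<Rightarrow> real"
  assumes Dpos: "\<And>p. D p > 0"
    and y: "\<And>k. k \<in> {1..N-1} \<Longrightarrow> y k = D (N-1-k) / D (N-k)"
    and "m \<le> N - 1"
  shows "(\<Prod>k\<in>{1..m}. y k) = D (N-1-m) / D (N-1)"
  using \<open>m \<le> N - 1\<close>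
proof (induction m)
  case 0
  show ?case using Dpos[of "N-1"] by simp
next
  case (Suc m)
  have "{1..Suc m} = insert (Suc m) {1..m}" by auto
  then have "(\<Prod>k\<in>{1..Suc m}. y k) = y (Suc m) * (\<Prod>k\<in>{1..m}. y k)" by simp
  also have "(\<Prod>k\<in>{1..m}. y k) = D (N-1-m) / D (N-1)" using Suc by simp
  also have "y (Suc m) = D (N - 1 - Suc m) / D (N - 1 - m)"
  proof -
    have "Suc m \<in> {1..N-1}" using Suc.prems by simp
    moreover have "N - Suc m = N - 1 - m" by simp
    ultimately show ?thesis using y by metis
  qed
  also have "D (N - 1 - Suc m) / D (N - 1 - m) * (D (N-1-m) / D (N-1)) = D (N - 1 - Suc m) / D (N - 1)"
    using Dpos[of "N-1-m"] by simp
  finally show ?case .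
qed

text \<open>The N-th root of 1/D^N, written with powr as in a_scale.\<close>
lemma inverse_power_powr:
  fixes D :: real
  assumes "D > 0" and "N \<ge> 1"
  shows "(1 / D ^ N) powr (-1 / real N) = D"
proof -
  have "1 / D ^ N = D powr (- real N)"
    using assms(1) by (simp add: powr_minus powr_realpow divide_inverse)
  then have "(1 / D ^ N) powr (-1 / real N) = D powr (- real N * (-1 / real N))"
    by (simp add: powr_powr)
  also have "- real N * (-1 / real N) = 1" using assms(2) by simp
  finally show ?thesis using assms(1) by simp
qed

lemma a_mat_exists:
  fixes d :: "'n::{finite,linorder} \<Rightarrow> real"
  assumes dpos: "\<And>i. d i > 0" and dprod: "prod d UNIV = 1"
  obtains y where "\<forall>j\<in>{1..CARD('n)-1}. y j > 0" "\<forall>j. j \<notin> {1..CARD('n)-1} \<longrightarrow> y j = 1"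
    "a_mat y = diagm d"
proof -
  define N where "N = CARD('n)"
  have N1: "N \<ge> 1" unfolding N_def by (simp add: Suc_leI)
  define D where "D p = d (pos_index p :: 'n)" for p
  have Dpos: "D p > 0" for p unfolding D_def using dpos by simp
  define y where "y k = (if k \<in> {1..N-1} then D (N-1-k) / D (N-k) else 1)" for k
  have ypos: "\<forall>j\<in>{1..N-1}. y j > 0" unfolding y_def using Dpos by simp
  have P: "(\<Prod>k\<in>{1..m}. y k) = D (N-1-m) / D (N-1)" if "m \<le> N - 1" for m
    by (rule prod_ratio_telescope[OF Dpos _ that]) (simp add: y_def)
  have "(\<Prod>j\<in>{1..N-1}. y j ^ (N - j)) = (\<Prod>p<N. D p / D (N-1))"
    unfolding prod_power_triangle
  proof (rule prod.cong)
    fix p assume "p \<in> {..<N}"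
    then show "(\<Prod>k\<in>{1..N-1-p}. y k) = D p / D (N-1)" using P[of "N-1-p"] by simp
  qed simp
  also have "\<dots> = (\<Prod>p<N. D p) / D (N-1) ^ N" by (simp add: prod_dividef)
  also have "(\<Prod>p<N. D p) = 1" unfolding D_def N_def using dprod prod_pos_index[of d] by simp
  finally have prod_y: "(\<Prod>j\<in>{1..N-1}. y j ^ (N - j)) = 1 / D (N-1) ^ N" .
  have scale: "a_scale N y = D (N-1)"
    unfolding a_scale_def prod_y using Dpos N1 by (rule inverse_power_powr)
  have "a_mat y $ i $ i = d i" for i :: 'n
  proof -
    have "pos i \<le> N - 1" using pos_less_card[of i] unfolding N_def by simp
    then have pos_eq: "N - 1 - (N - 1 - pos i) = pos i" by simp
    have "a_mat y $ i $ i = D (N-1) * (\<Prod>k\<in>{1..N - 1 - pos i}. y k)"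
      unfolding a_mat_diagm N_def[symmetric] scale by simp
    also have "\<dots> = D (N-1) * (D (pos i) / D (N-1))"
      using P[of "N-1-pos i"] pos_eq by simp
    also have "\<dots> = D (pos i)" using Dpos[of "N-1"] by simp
    finally show ?thesis by (simp add: D_def)
  qed
  then have "a_mat y = diagm d" unfolding vec_eq_iff by (auto simp: a_mat_def)
  moreover have "\<forall>j. j \<notin> {1..N-1} \<longrightarrow> y j = 1" unfolding y_def by simp
  ultimately show ?thesis using that ypos unfolding N_def by blast
qed

lemma iwasawa_y_decomposition:
  fixes g :: "real^('n::{finite,linorder})^('n::{finite,linorder})"
  assumes dg: "det g = 1"
  obtains x \<xi> where "\<forall>j\<in>{1..CARD('n)-1}. iwasawa_y g j > 0"
    "upper_unipotent x" "\<xi> \<in> SOn" "g = x ** (a_mat (iwasawa_y g) :: 'n sqmat) ** \<xi>"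
proof -
  obtain x d \<xi> where xd: "upper_unipotent x" "\<xi> \<in> SOn" "\<And>i. d i > 0" "g = x ** diagm d ** \<xi>"
    using iwasawa_decomposition_diagonal[OF dg] by blast
  have "prod d UNIV = 1" using dg xd(2) unfolding xd(4) det_mul det_upper_unipotent[OF xd(1)] det_diagm
    by (simp add: SOn_def rotation_matrix_def)
  then obtain y where y: "\<forall>j\<in>{1..CARD('n)-1}. y j > 0" "\<forall>j. j \<notin> {1..CARD('n)-1} \<longrightarrow> y j = 1"
      "a_mat y = diagm d"
    using a_mat_exists[of d, OF xd(3)] by blast
  have "\<exists>y. (\<forall>j\<in>{1..CARD('n)-1}. y j > 0) \<and> (\<forall>j. j \<notin> {1..CARD('n)-1} \<longrightarrow> y j = 1)
       \<and> (\<exists>x \<xi>. upper_unipotent x \<and> \<xi> \<in> SOn \<and> g = x ** (a_mat y :: 'n sqmat) ** \<xi>)"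
    using y xd by metis
  then have iw: "(\<forall>j\<in>{1..CARD('n)-1}. iwasawa_y g j > 0) \<and> (\<forall>j. j \<notin> {1..CARD('n)-1} \<longrightarrow> iwasawa_y g j = 1)
       \<and> (\<exists>x \<xi>. upper_unipotent x \<and> \<xi> \<in> SOn \<and> g = x ** (a_mat (iwasawa_y g) :: 'n sqmat) ** \<xi>)"
    unfolding iwasawa_y_def by (rule someI_ex)
  obtain x' \<xi>' where "upper_unipotent x'" "\<xi>' \<in> SOn" "g = x' ** (a_mat (iwasawa_y g) :: 'n sqmat) ** \<xi>'"
    using iw[THEN conjunct2, THEN conjunct2] by blast
  then show ?thesis by (rule that[OF iw[THEN conjunct1]])
qed

lemma diagm_norm_bounds:
  assumes lo: "\<And>k. 0 \<le> m \<and> m \<le> \<bar>d k\<bar>" and hi: "\<And>k. \<bar>d k\<bar> \<le> M"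
  shows "m * norm z \<le> norm (diagm d *v z)" "norm (diagm d *v z) \<le> M * norm z"
proof -
  have m0: "m \<ge> 0" using lo by blast
  have M0: "M \<ge> 0" using hi[of undefined] by linarith
  have norm_sq: "(norm x)^2 = (\<Sum>k\<in>UNIV. (x$k)^2)" for x :: "real^'a"
    unfolding power2_norm_eq_inner inner_vec_def by (simp add: power2_eq_square)
  have eq: "(norm (diagm d *v z))^2 = (\<Sum>k\<in>UNIV. (d k)^2 * (z$k)^2)"
    unfolding norm_sq diagm_mult_vector_nth by (simp add: power_mult_distrib)
  have "(m * norm z)^2 = (\<Sum>k\<in>UNIV. m^2 * (z$k)^2)"
    by (simp add: power_mult_distrib norm_sq sum_distrib_left)
  also have "\<dots> \<le> (\<Sum>k\<in>UNIV. (d k)^2 * (z$k)^2)"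
  proof (rule sum_mono)
    fix k
    have "m^2 \<le> (d k)^2" using lo[of k] by (metis abs_le_square_iff abs_of_nonneg)
    then show "m^2 * (z$k)^2 \<le> (d k)^2 * (z$k)^2" by (simp add: mult_right_mono)
  qed
  finally show "m * norm z \<le> norm (diagm d *v z)"
    using m0 eq by (metis norm_ge_zero power2_le_imp_le)
  have "(\<Sum>k\<in>UNIV. (d k)^2 * (z$k)^2) \<le> (\<Sum>k\<in>UNIV. M^2 * (z$k)^2)"
  proof (rule sum_mono)
    fix k
    have "(d k)^2 \<le> M^2" using hi[of k] by (metis abs_le_square_iff abs_of_nonneg M0)
    then show "(d k)^2 * (z$k)^2 \<le> M^2 * (z$k)^2" by (simp add: mult_right_mono)
  qed
  also have "\<dots> = (M * norm z)^2"
    by (simp add: power_mult_distrib norm_sq sum_distrib_left)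
  finally show "norm (diagm d *v z) \<le> M * norm z"
    using M0 eq by (metis norm_ge_zero mult_nonneg_nonneg power2_le_imp_le)
qed

lemma exp_diag_norm_bounds:
  shows "exp (- norm a) * norm z \<le> norm (exp_diag a *v z)"
    and "norm (exp_diag a *v z) \<le> exp (norm a) * norm z"
proof -
  have b: "exp (- norm a) \<le> exp (a $ k)" "exp (a $ k) \<le> exp (norm a)" for k
    using component_le_norm_cart[of a k] by auto
  show "exp (- norm a) * norm z \<le> norm (exp_diag a *v z)" unfolding exp_diag_diagm
    by (rule diagm_norm_bounds(1)[where M="exp (norm a)"]) (use b in auto)
  show "norm (exp_diag a *v z) \<le> exp (norm a) * norm z" unfolding exp_diag_diagm
    by (rule diagm_norm_bounds(2)[where m="exp (- norm a)"]) (use b in auto)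
qed

lemma norm_axis: "norm (axis i (c::real)) = \<bar>c\<bar>"
proof -
  have "axis i c = c *\<^sub>R axis i 1" by (simp add: vec_eq_iff axis_def)
  then show ?thesis by simp
qed

text \<open>The i-th Iwasawa diagonal entry of g as an intrinsic quantity: the least norm of
  g^T w over the vectors w with w_i = 1 and w_j = 0 for j < i.  Unlike iwasawa_y, this is
  visibly a measurable function of g.\<close>
definition flag_vectors :: "'n::{finite,linorder} \<Rightarrow> (real^('n::{finite,linorder})) set" where
  "flag_vectors i = {w. w $ i = 1 \<and> (\<forall>j<i. w $ j = 0)}"

definition iwasawa_entry :: "('n::{finite,linorder}) sqmat \<Rightarrow> 'n \<Rightarrow> real" where
  "iwasawa_entry g i = Inf ((\<lambda>w. norm (transpose g *v w)) ` flag_vectors i)"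

lemma upper_unipotent_transpose_nth:
  assumes ux: "upper_unipotent x" and w: "\<forall>k<j. w $ k = 0"
  shows "(transpose x *v w) $ j = w $ j"
proof -
  have "(transpose x *v w) $ j = (\<Sum>k\<in>UNIV. x $ k $ j * w $ k)"
    by (simp add: matrix_vector_mult_def transpose_def)
  also have "\<dots> = (\<Sum>k\<in>UNIV. if k = j then w $ j else 0)"
  proof (rule sum.cong)
    fix k
    show "x $ k $ j * w $ k = (if k = j then w $ j else 0)"
      using ux w by (cases k j rule: linorder_cases) (auto simp: upper_unipotent_def)
  qed simp
  finally show ?thesis by simp
qed

text \<open>x^T maps some flag vector onto the basis vector e_i (solve x^T w = e_i and check, by
  induction along the order, that w vanishes below i).\<close>
lemma flag_vector_to_axis:
  assumes ux: "upper_unipotent x"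
  obtains w where "w \<in> flag_vectors i" "transpose x *v w = axis i 1"
proof -
  have "det (transpose x) \<noteq> 0" using det_upper_unipotent[OF ux] by simp
  then obtain A' where "transpose x ** A' = mat 1"
    using invertible_det_nz unfolding invertible_def by blast
  then have tw: "transpose x *v (A' *v axis i 1) = axis i 1" by (simp add: matrix_vector_mul_assoc)
  define w where "w = A' *v axis i 1"
  have "\<forall>j. pos j = m \<longrightarrow> j < i \<longrightarrow> w $ j = 0" for m
  proof (induction m rule: less_induct)
    case (less m)
    show ?case
    proof (intro allI impI)
      fix j assume j: "pos j = m" "j < i"
      have "\<forall>k<j. w $ k = 0" using less j pos_strict_mono by fastforce
      then have "w $ j = (transpose x *v w) $ j" using upper_unipotent_transpose_nth[OF ux] by simp
      then show "w $ j = 0" using tw j(2) unfolding w_def by (simp add: axis_def)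
    qed
  qed
  then have low: "\<forall>j<i. w $ j = 0" by blast
  then have "w $ i = (transpose x *v w) $ i" using upper_unipotent_transpose_nth[OF ux] by simp
  then have "w $ i = 1" using tw unfolding w_def by simp
  then have "w \<in> flag_vectors i" using low by (simp add: flag_vectors_def)
  then show ?thesis using that tw unfolding w_def by blast
qed

text \<open>If g = x diag(d) \<xi> is an Iwasawa decomposition, iwasawa_entry g i = d_i: the norm is
  at least |d_i| by looking at the i-th coordinate, with equality at the flag vector of
  the previous lemma.\<close>
lemma iwasawa_entry_eq:
  assumes ux: "upper_unipotent x" and o\<xi>: "orthogonal_matrix \<xi>" and dpos: "\<And>k. d k > 0"
    and g: "g = x ** diagm d ** \<xi>"
  shows "iwasawa_entry g i = d i"
proof -
  have tg: "transpose g *v w = transpose \<xi> *v (diagm d *v (transpose x *v w))" for w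
    unfolding g by (simp only: matrix_transpose_mul transpose_diagm matrix_vector_mul_assoc
        matrix_mul_assoc)
  have ntg: "norm (transpose g *v w) = norm (diagm d *v (transpose x *v w))" for w
    unfolding tg by (rule orthogonal_matrix_norm) (simp add: o\<xi>)
  have lower: "d i \<le> norm (transpose g *v w)" if "w \<in> flag_vectors i" for w
  proof -
    have "(transpose x *v w) $ i = 1"
      using upper_unipotent_transpose_nth[OF ux] that by (simp add: flag_vectors_def)
    then show ?thesis
      using component_le_norm_cart[of "diagm d *v (transpose x *v w)" i] dpos[of i]
      unfolding ntg diagm_mult_vector_nth by simp
  qed
  obtain w0 where w0: "w0 \<in> flag_vectors i" "transpose x *v w0 = axis i 1"
    using flag_vector_to_axis[OF ux] by blast
  have "norm (transpose g *v w0) = d i"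
    unfolding ntg w0(2) diagm_axis using dpos[of i] by (simp add: norm_axis)
  then have "d i \<in> (\<lambda>w. norm (transpose g *v w)) ` flag_vectors i" using w0(1) by force
  then show ?thesis unfolding iwasawa_entry_def
    by (rule cInf_eq_minimum) (use lower in auto)
qed

text \<open>Lower bound of the Iwasawa entries by the polar height:  d_i = |g^T w0| for a flag
  vector w0, and |w0| \<ge> |w0_i| = 1, while g^T contracts by at most exp(-|a|).\<close>
lemma iwasawa_diagonal_lower_bound:
  assumes ux: "upper_unipotent x" and o\<xi>: "orthogonal_matrix \<xi>" and dpos: "\<And>k. d k > 0"
    and g: "g = x ** diagm d ** \<xi>"
    and o1: "orthogonal_matrix \<xi>1" and o2: "orthogonal_matrix \<xi>2"
    and g2: "g = \<xi>1 ** exp_diag a ** \<xi>2"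
  shows "exp (- norm a) \<le> d i"
proof -
  obtain w0 where w0: "w0 \<in> flag_vectors i" "transpose x *v w0 = axis i 1"
    using flag_vector_to_axis[OF ux] by blast
  have "1 \<le> norm w0"
    using component_le_norm_cart[of w0 i] w0(1) by (simp add: flag_vectors_def)
  then have "exp (- norm a) \<le> exp (- norm a) * norm w0" by simp
  also have "\<dots> = exp (- norm a) * norm (transpose \<xi>1 *v w0)"
    using o1 by (simp add: orthogonal_matrix_norm del: transpose_matrix_vector)
  also have "\<dots> \<le> norm (exp_diag a *v (transpose \<xi>1 *v w0))"
    by (rule exp_diag_norm_bounds(1))
  also have "\<dots> = norm (transpose \<xi>2 *v (exp_diag a *v (transpose \<xi>1 *v w0)))"
    using o2 by (simp add: orthogonal_matrix_norm del: transpose_matrix_vector)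
  also have "transpose \<xi>2 *v (exp_diag a *v (transpose \<xi>1 *v w0)) = transpose g *v w0"
    unfolding g2 exp_diag_diagm by (simp only: matrix_transpose_mul transpose_diagm
        matrix_vector_mul_assoc matrix_mul_assoc)
  also have "transpose g *v w0 = transpose \<xi> *v (diagm d *v (transpose x *v w0))"
    unfolding g by (simp only: matrix_transpose_mul transpose_diagm matrix_vector_mul_assoc
        matrix_mul_assoc)
  also have "norm \<dots> = d i"
    unfolding w0(2) diagm_axis using dpos[of i] o\<xi>
    by (simp add: orthogonal_matrix_norm norm_axis del: transpose_matrix_vector)
  finally show ?thesis .
qed

text \<open>Upper bound: for the unit vector v = \<xi>^T e_i the i-th coordinate of g v is d_i,
  while g expands by at most exp |a|.\<close>
lemma iwasawa_diagonal_upper_bound: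
  assumes ux: "upper_unipotent x" and o\<xi>: "orthogonal_matrix \<xi>" and dpos: "\<And>k. d k > 0"
    and g: "g = x ** diagm d ** \<xi>"
    and o1: "orthogonal_matrix \<xi>1" and o2: "orthogonal_matrix \<xi>2"
    and g2: "g = \<xi>1 ** exp_diag a ** \<xi>2"
  shows "d i \<le> exp (norm a)"
proof -
  define v where "v = transpose \<xi> *v axis i 1"
  have "\<xi> ** transpose \<xi> = mat 1" using o\<xi> by (simp add: orthogonal_matrix_def)
  then have "(x ** diagm d ** (\<xi> ** transpose \<xi>)) *v axis i 1 = x *v (diagm d *v axis i 1)"
    by (simp only: matrix_mul_rid matrix_vector_mul_assoc)
  moreover have "g *v v = (x ** diagm d ** (\<xi> ** transpose \<xi>)) *v axis i 1"
    unfolding g v_def by (simp only: matrix_vector_mul_assoc matrix_mul_assoc)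
  ultimately have gv: "g *v v = x *v axis i (d i)" by (simp add: diagm_axis)
  have "(x *v axis i (d i)) $ i = (\<Sum>k\<in>UNIV. x$i$k * axis i (d i) $ k)"
    by (simp add: matrix_vector_mult_def)
  also have "\<dots> = (\<Sum>k\<in>UNIV. if k = i then d i else 0)"
    by (rule sum.cong) (use ux in \<open>auto simp: axis_def upper_unipotent_def\<close>)
  finally have "(x *v axis i (d i)) $ i = d i" by simp
  then have "d i \<le> norm (g *v v)"
    using component_le_norm_cart[of "g *v v" i] gv dpos[of i] by simp
  also have "norm (g *v v) = norm (exp_diag a *v (\<xi>2 *v v))"
    unfolding g2 by (simp add: matrix_vector_mul_assoc[symmetric] orthogonal_matrix_norm[OF o1])
  also have "\<dots> \<le> exp (norm a) * norm (\<xi>2 *v v)" by (rule exp_diag_norm_bounds(2))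
  also have "norm (\<xi>2 *v v) = 1"
    unfolding v_def using o\<xi> o2 by (simp add: orthogonal_matrix_norm del: transpose_matrix_vector)
  finally show ?thesis by simp
qed

text \<open>iwasawa_entry is upper semicontinuous (an infimum of continuous functions), hence
  Borel measurable: its strict sublevel sets are unions of open sets.\<close>
lemma continuous_on_transpose_mult_vector:
  "continuous_on UNIV (\<lambda>g::real^'n^'m. transpose g *v w)"
proof -
  have "linear (\<lambda>g::real^'n^'m. transpose g *v w)"
    by (intro linearI)
      (simp_all add: transpose_def matrix_vector_mult_def vec_eq_iff sum.distrib
        sum_distrib_left algebra_simps)
  then show ?thesis by (simp add: linear_continuous_on linear_conv_bounded_linear)
qed

lemma iwasawa_entry_measurable [measurable]:
  "(\<lambda>g. iwasawa_entry g i) \<in> borel_measurable borel"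
proof (rule borel_measurable_iff_less[THEN iffD2], intro allI)
  fix t :: real
  let ?norms = "\<lambda>g :: 'a sqmat. (\<lambda>w. norm (transpose g *v w)) ` flag_vectors i"
  have "axis i 1 \<in> flag_vectors i" by (simp add: flag_vectors_def axis_def)
  then have ne: "?norms g \<noteq> {}" for g by blast
  have bdd: "bdd_below (?norms g)" for g by (rule bdd_belowI[of _ 0]) auto
  have "{g. iwasawa_entry g i < t} = (\<Union>w\<in>flag_vectors i. {g::'a sqmat. norm (transpose g *v w) < t})"
    unfolding iwasawa_entry_def using cInf_less_iff[OF ne bdd] by auto
  moreover have "open {g::'a sqmat. norm (transpose g *v w) < t}" for w
    by (rule open_Collect_less)
      (intro continuous_intros continuous_on_compose2[OF continuous_on_transpose_mult_vector], auto)
  ultimately have "open {g::'a sqmat. iwasawa_entry g i < t}" by auto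
  then show "{g \<in> space borel. iwasawa_entry g i < t} \<in> sets borel" by simp
qed

definition shifted_param :: "nat \<Rightarrow> (nat \<Rightarrow> complex) \<Rightarrow> nat \<Rightarrow> complex" where
  "shifted_param N l k = l k + complex_of_real ((real N - 2 * real k + 1) / 2)"

text \<open>Since \<Sum>_k (n - 2k + 1) = 0, the shifted parameters sum to zero when the \<ell>_j do.\<close>
lemma sum_shifted_param:
  assumes "(\<Sum>j\<in>{1..N}. l j) = 0"
  shows "(\<Sum>k\<in>{1..N}. shifted_param N l k) = 0"
proof -
  have "(\<Sum>k\<in>{1..N}. real k) = real N * (real N + 1) / 2"
    by (induction N) (simp_all add: algebra_simps)
  then have "(\<Sum>k\<in>{1..N}. (real N - 2 * real k + 1)) = 0"
    by (simp add: sum_subtractf sum.distrib sum_distrib_left[symmetric] algebra_simps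
        sum_distrib_right[symmetric])
  then have "(\<Sum>k\<in>{1..N}. complex_of_real ((real N - 2 * real k + 1) / 2)) = 0"
    by (simp only: of_real_sum[symmetric] sum_divide_distrib[symmetric]) simp
  then show ?thesis unfolding shifted_param_def using assms by (simp add: sum.distrib)
qed

text \<open>An intrinsic formula for \<phi>_\<ell>: the exponent of the product of Iwasawa entries,
  written with logarithms, is measurable in g.\<close>
definition phi_entries :: "(nat \<Rightarrow> complex) \<Rightarrow> ('n::{finite,linorder}) sqmat \<Rightarrow> complex" where
  "phi_entries l g = exp (\<Sum>k\<in>{1..CARD('n)}.
      shifted_param CARD('n) l k * complex_of_real (ln (iwasawa_entry g (pos_index (k - 1)))))"

lemma phi_entries_measurable [measurable]:
  "phi_entries l \<in> borel_measurable (borel :: ('n::{finite,linorder}) sqmat measure)"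
  unfolding phi_entries_def[abs_def] by measurable

text \<open>Exchange of summation behind \<phi>_\<ell> = phi_entries: with weights s_k summing to zero, the
  constant C drops out and the triangular double sum can be reordered.\<close>
lemma sum_partial_sums_swap:
  fixes s :: "nat \<Rightarrow> complex" and C :: complex and Y :: "nat \<Rightarrow> complex"
  assumes "(\<Sum>k\<in>{1..N}. s k) = 0"
  shows "(\<Sum>k\<in>{1..N}. s k * (C + (\<Sum>i\<in>{1..N-k}. Y i)))
       = (\<Sum>i\<in>{1..N-1}. (\<Sum>k\<in>{1..N-i}. s k) * Y i)"
proof -
  have "(\<Sum>k\<in>{1..N}. s k * (C + (\<Sum>i\<in>{1..N-k}. Y i)))
      = C * (\<Sum>k\<in>{1..N}. s k) + (\<Sum>k\<in>{1..N}. \<Sum>i\<in>{1..N-k}. s k * Y i)"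
    by (simp add: distrib_left sum.distrib sum_distrib_left sum_distrib_right mult_ac)
  also have "(\<Sum>k\<in>{1..N}. \<Sum>i\<in>{1..N-k}. s k * Y i)
      = (\<Sum>k\<in>{1..N}. \<Sum>i\<in>{i\<in>{1..N}. k + i \<le> N}. s k * Y i)"
    by (rule sum.cong) (auto intro!: sum.cong)
  also have "\<dots> = (\<Sum>i\<in>{1..N}. \<Sum>k\<in>{k\<in>{1..N}. k + i \<le> N}. s k * Y i)"
    by (rule sum.swap_restrict) auto
  also have "\<dots> = (\<Sum>i\<in>{1..N}. (\<Sum>k\<in>{1..N-i}. s k) * Y i)"
    by (simp add: sum_distrib_right) (auto intro!: sum.cong)
  also have "\<dots> = (\<Sum>i\<in>{1..N-1}. (\<Sum>k\<in>{1..N-i}. s k) * Y i)"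
    by (rule sum.mono_neutral_right) auto
  finally show ?thesis using assms by simp
qed

lemma ln_iwasawa_entry:
  fixes g :: "('n::{finite,linorder}) sqmat"
  assumes dg: "det g = 1" and k: "k \<in> {1..CARD('n)}"
  shows "ln (iwasawa_entry g (pos_index (k - 1)))
    = ln (a_scale CARD('n) (iwasawa_y g)) + (\<Sum>i\<in>{1..CARD('n)-k}. ln (iwasawa_y g i))"
proof -
  define N where "N = CARD('n)"
  define y where "y = iwasawa_y g"
  define c where "c = a_scale N y"
  obtain x \<xi> where ypos: "\<forall>j\<in>{1..N-1}. y j > 0" and ux: "upper_unipotent x" and \<xi>: "\<xi> \<in> SOn"
    and geq: "g = x ** (a_mat y :: 'n sqmat) ** \<xi>"
    using iwasawa_y_decomposition[OF dg] unfolding N_def y_def by metis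
  have "(\<Prod>j\<in>{1..N-1}. y j ^ (N - j)) > 0" using ypos by (intro prod_pos) auto
  then have cpos: "c > 0" unfolding c_def a_scale_def powr_gt_zero by linarith
  define d where "d i = c * (\<Prod>k\<in>{1..N-1-pos i}. y k)" for i :: 'n
  have dpos: "d i > 0" for i
    unfolding d_def using cpos ypos by (intro mult_pos_pos prod_pos) auto
  have "a_mat y = diagm d" unfolding a_mat_diagm d_def c_def N_def ..
  then have entry: "iwasawa_entry g i = d i" for i
    using iwasawa_entry_eq[OF ux _ dpos] geq \<xi> by (simp add: SOn_def rotation_matrix_def)
  have "pos (pos_index (k-1) :: 'n) = k - 1" using k unfolding N_def by (intro pos_pos_index) auto
  then have entry_k: "iwasawa_entry g (pos_index (k-1)) = c * (\<Prod>i\<in>{1..N-k}. y i)"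
    unfolding entry d_def using k N_def by (simp add: diff_diff_add)
  have ypos_k: "y i > 0" if "i \<in> {1..N-k}" for i
  proof -
    have "i \<in> {1..N-1}" using that k by (auto simp: N_def)
    then show ?thesis using ypos by blast
  qed
  have "ln (iwasawa_entry g (pos_index (k-1))) = ln (c * (\<Prod>i\<in>{1..N-k}. y i))"
    using entry_k by simp
  also have "\<dots> = ln c + ln (\<Prod>i\<in>{1..N-k}. y i)"
    using cpos ypos_k by (intro ln_mult_pos prod_pos) auto
  also have "ln (\<Prod>i\<in>{1..N-k}. y i) = (\<Sum>i\<in>{1..N-k}. ln (y i))"
    using ypos_k by (intro ln_prod) (simp, metis less_irrefl)
  finally show ?thesis unfolding N_def y_def c_def .
qed

text \<open>On SL(n,R), \<phi>_\<ell> coincides with the intrinsic formula phi_entries.  This is where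
  the hypothesis \<Sum>\<ell>_j = 0 enters: it makes the normalizing scalar of a_y irrelevant.\<close>
lemma phi_eq_phi_entries:
  fixes g :: "('n::{finite,linorder}) sqmat"
  assumes dg: "det g = 1" and ls: "(\<Sum>j\<in>{1..CARD('n)}. l j) = 0"
  shows "phi l g = phi_entries l g"
proof -
  define N where "N = CARD('n)"
  define y where "y = iwasawa_y g"
  define s where "s = shifted_param N l"
  have ypos: "\<forall>j\<in>{1..N-1}. y j > 0"
    using iwasawa_y_decomposition[OF dg] unfolding N_def y_def by metis
  have "phi_entries l g = exp (\<Sum>k\<in>{1..N}. s k *
      (complex_of_real (ln (a_scale N y)) + (\<Sum>i\<in>{1..N-k}. complex_of_real (ln (y i)))))"
    unfolding phi_entries_def N_def[symmetric] s_def
  proof (intro arg_cong[where f = exp] sum.cong refl)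
    fix k assume "k \<in> {1..N}"
    then show "shifted_param N l k * complex_of_real (ln (iwasawa_entry g (pos_index (k - 1))))
      = shifted_param N l k * (complex_of_real (ln (a_scale N y))
          + (\<Sum>i\<in>{1..N-k}. complex_of_real (ln (y i))))"
      using ln_iwasawa_entry[OF dg, of k] unfolding N_def y_def by simp
  qed
  also have "\<dots> = exp (\<Sum>i\<in>{1..N-1}. (\<Sum>k\<in>{1..N-i}. s k) * complex_of_real (ln (y i)))"
    using sum_shifted_param[OF ls] unfolding N_def s_def by (subst sum_partial_sums_swap) auto
  also have "\<dots> = (\<Prod>i\<in>{1..N-1}. exp ((\<Sum>k\<in>{1..N-i}. s k) * complex_of_real (ln (y i))))"
    by (simp add: exp_sum)
  also have "\<dots> = phi l g"
    unfolding phi_def N_def[symmetric] y_def[symmetric]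
  proof (rule prod.cong)
    fix j assume j: "j \<in> {1..N-1}"
    then have "y j > 0" using ypos by blast
    then show "exp ((\<Sum>k\<in>{1..N-j}. s k) * complex_of_real (ln (y j)))
      = complex_of_real (y j) powr (\<Sum>k\<in>{1..N-j}. l k + complex_of_real ((real N - 2 * real k + 1) / 2))"
      by (simp add: powr_def s_def shifted_param_def Ln_of_real)
  qed simp
  finally show ?thesis ..
qed

lemma abs_ln_iwasawa_entry_le:
  fixes g :: "('n::{finite,linorder}) sqmat"
  assumes dg: "det g = 1"
  shows "\<bar>ln (iwasawa_entry g i)\<bar> \<le> polar_height g"
proof -
  obtain \<xi>1 \<xi>2 a where sv: "\<xi>1 \<in> SOn" "\<xi>2 \<in> SOn" "g = \<xi>1 ** exp_diag a ** \<xi>2"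
    "polar_height g = norm a"
    using polar_height_decomposition[OF dg] by blast
  obtain x d \<xi> where iw: "upper_unipotent x" "\<xi> \<in> SOn" "\<And>i. d i > 0" "g = x ** diagm d ** \<xi>"
    using iwasawa_decomposition_diagonal[OF dg] by blast
  have o: "orthogonal_matrix \<xi>" "orthogonal_matrix \<xi>1" "orthogonal_matrix \<xi>2"
    using iw(2) sv(1,2) by (auto simp: SOn_def rotation_matrix_def)
  have "iwasawa_entry g i = d i" by (rule iwasawa_entry_eq[OF iw(1) o(1) iw(3,4)])
  moreover have "exp (- norm a) \<le> d i" "d i \<le> exp (norm a)"
    using iwasawa_diagonal_lower_bound[OF iw(1) o(1) iw(3,4) o(2,3) sv(3)]
      iwasawa_diagonal_upper_bound[OF iw(1) o(1) iw(3,4) o(2,3) sv(3)] by auto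
  moreover have "- norm a \<le> ln (d i)" "ln (d i) \<le> norm a"
    using calculation(2,3) iw(3)[of i] by (metis ln_exp ln_le_cancel_iff exp_gt_zero)+
  ultimately show ?thesis using sv(4) by (simp add: abs_le_iff)
qed

text \<open>A quantitative bound |e^w - 1| \<le> M (e^(\<gamma> t) - 1)/\<gamma> from |w| \<le> M t and |Re w| \<le> \<gamma> t,
  obtained by integrating the derivative of s \<mapsto> e^(s w) over [0,1].\<close>
lemma exp_minus_one_bound:
  fixes w :: complex and t M \<gamma> :: real
  assumes t: "t \<ge> 0" and g: "\<gamma> > 0" and wM: "cmod w \<le> M * t" and wR: "\<bar>Re w\<bar> \<le> \<gamma> * t"
  shows "cmod (exp w - 1) \<le> M * (exp (\<gamma> * t) - 1) / \<gamma>"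
proof -
  define f where "f s = exp (complex_of_real s * w)" for s :: real
  define f' where "f' s = w * exp (complex_of_real s * w)" for s :: real
  define G where "G s = M * exp (s * (\<gamma> * t)) / \<gamma>" for s :: real
  define G' where "G' s = M * t * exp (s * (\<gamma> * t))" for s :: real
  have "(f has_vector_derivative f' s) (at s within {0..1})" for s
  proof -
    have "((\<lambda>z. exp (z * w)) has_field_derivative w * exp (complex_of_real s * w)) (at (complex_of_real s))"
      by (auto intro!: derivative_eq_intros)
    then show ?thesis unfolding f_def f'_def by (rule has_vector_derivative_real_field)
  qed
  then have fi: "(f' has_integral (f 1 - f 0)) {0..1}"
    by (intro fundamental_theorem_of_calculus) auto
  have "(G has_real_derivative G' s) (at s within {0..1})" for s
    unfolding G_def G'_def using g by (auto intro!: derivative_eq_intros)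
  then have Gi: "(G' has_integral (G 1 - G 0)) {0..1}"
    by (intro fundamental_theorem_of_calculus) (auto simp: has_real_derivative_iff_has_vector_derivative)
  have bnd: "norm (f' s) \<le> G' s" if "s \<in> {0..1}" for s
  proof -
    have s: "0 \<le> s" using that by auto
    have "norm (f' s) = cmod w * exp (s * Re w)" unfolding f'_def by (simp add: norm_mult)
    also have "\<dots> \<le> (M * t) * exp (s * (\<gamma> * t))"
    proof (rule mult_mono)
      have "s * Re w \<le> s * (\<gamma> * t)" using wR s by (intro mult_left_mono) auto
      then show "exp (s * Re w) \<le> exp (s * (\<gamma> * t))" by simp
    next
      show "0 \<le> M * t" using wM norm_ge_zero[of w] by linarith
    qed (use wM in auto)
    finally show ?thesis unfolding G'_def by simp
  qed
  have "norm (integral {0..1} f') \<le> integral {0..1} G'"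
    using fi Gi bnd by (intro integral_norm_bound_integral) (auto simp: has_integral_integrable)
  then have "norm (f 1 - f 0) \<le> G 1 - G 0"
    using integral_unique[OF fi] integral_unique[OF Gi] by simp
  then show ?thesis unfolding f_def G_def by (simp add: diff_divide_distrib right_diff_distrib)
qed

text \<open>\<Sum>_{k=1}^N |N - 2k + 1| \<le> N^2/2 (removing the two outer terms reduces N by 2).\<close>
lemma sum_abs_centered_le: "(\<Sum>k\<in>{1..N}. \<bar>real N - 2 * real k + 1\<bar>) \<le> real N ^ 2 / 2"
proof (induction N rule: nat_less_induct)
  case (1 N)
  show ?case
  proof (cases N)
    case (Suc N1)
    show ?thesis
    proof (cases N1)
      case (Suc M)
      define h where "h k = \<bar>real N - 2 * real k + 1\<bar>" for k
      have "{1..N} = insert N (insert 1 {Suc 1..Suc M})" using Suc \<open>N = Suc N1\<close> by auto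
      then have "(\<Sum>k\<in>{1..N}. h k) = h N + h 1 + (\<Sum>k\<in>{Suc 1..Suc M}. h k)"
        using Suc \<open>N = Suc N1\<close> by simp
      also have "(\<Sum>k\<in>{Suc 1..Suc M}. h k) = (\<Sum>k\<in>{1..M}. \<bar>real M - 2 * real k + 1\<bar>)"
        unfolding sum.shift_bounds_cl_Suc_ivl h_def
        using Suc \<open>N = Suc N1\<close> by (intro sum.cong) (auto simp: algebra_simps)
      also have "\<dots> \<le> real M ^ 2 / 2" using "1" Suc \<open>N = Suc N1\<close> by simp
      finally show ?thesis using Suc \<open>N = Suc N1\<close>
        by (simp add: h_def power2_eq_square algebra_simps)
    qed (simp add: \<open>N = Suc N1\<close>)
  qed simp
qed

lemma sum_abs_Re_shifted_param_le:
  assumes Rl: "\<forall>j\<in>{1..N}. \<bar>Re (l j)\<bar> < 1/2"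
  shows "(\<Sum>k\<in>{1..N}. \<bar>Re (shifted_param N l k)\<bar>) \<le> real (N * (N + 6)) / 4"
proof -
  have "(\<Sum>k\<in>{1..N}. \<bar>Re (shifted_param N l k)\<bar>)
      \<le> (\<Sum>k\<in>{1..N}. 1/2 + \<bar>real N - 2 * real k + 1\<bar> / 2)"
  proof (rule sum_mono)
    fix k assume "k \<in> {1..N}"
    then have "\<bar>Re (l k)\<bar> < 1/2" using Rl by blast
    moreover have "\<bar>Re (l k) + (real N - 2 * real k + 1) / 2\<bar>
        \<le> \<bar>Re (l k)\<bar> + \<bar>(real N - 2 * real k + 1) / 2\<bar>"
      by (rule abs_triangle_ineq)
    ultimately show "\<bar>Re (shifted_param N l k)\<bar> \<le> 1/2 + \<bar>real N - 2 * real k + 1\<bar> / 2"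
      by (simp add: shifted_param_def)
  qed
  also have "\<dots> = real N / 2 + (\<Sum>k\<in>{1..N}. \<bar>real N - 2 * real k + 1\<bar>) / 2"
    by (simp add: sum.distrib sum_divide_distrib)
  also have "\<dots> \<le> real N / 2 + (real N ^ 2 / 2) / 2" using sum_abs_centered_le[of N] by simp
  also have "\<dots> \<le> real (N * (N + 6)) / 4" by (simp add: power2_eq_square algebra_simps)
  finally show ?thesis .
qed

text \<open>The constant in LB is positive: already the first shifted parameter has positive real
  part, Re(\<ell>_1) + (n-1)/2 > -1/2 + 1/2.\<close>
lemma sum_cmod_shifted_param_pos:
  assumes N2: "N \<ge> 2" and Rl: "\<forall>j\<in>{1..N}. \<bar>Re (l j)\<bar> < 1/2"
  shows "(\<Sum>k\<in>{1..N}. cmod (shifted_param N l k)) > 0"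
proof -
  have "\<bar>Re (l 1)\<bar> < 1/2" using Rl N2 by auto
  then have "Re (l 1) > -1/2" by (simp add: abs_less_iff)
  moreover have "(real N - 1) / 2 \<ge> 1/2" using N2 by simp
  moreover have "Re (shifted_param N l 1) = Re (l 1) + (real N - 1) / 2"
    by (simp add: shifted_param_def)
  ultimately have "Re (shifted_param N l 1) > 0" by linarith
  then have "cmod (shifted_param N l 1) > 0" by auto
  also have "cmod (shifted_param N l 1) \<le> (\<Sum>k\<in>{1..N}. cmod (shifted_param N l k))"
    by (rule member_le_sum) (use N2 in auto)
  finally show ?thesis .
qed

text \<open>Pointwise estimate: near the identity \<phi>_\<ell> is close to 1.  With s_k the shifted
  parameters, \<phi>_\<ell>(g) = exp w for w = \<Sum> s_k ln(entry_k), and |ln entry_k| \<le> \<sigma>(g) < \<delta>;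
  so |w| \<le> (\<Sum>|s_k|) \<sigma>(g) and |Re w| \<le> n(n+6)/4 \<sigma>(g).\<close>
lemma phi_entries_near_one:
  fixes g :: "('n::{finite,linorder}) sqmat" and l :: "nat \<Rightarrow> complex"
  assumes N2: "CARD('n) \<ge> 2" and Rl: "\<forall>j\<in>{1..CARD('n)}. \<bar>Re (l j)\<bar> < 1/2"
    and dg: "det g = 1" and ph: "polar_height g < \<delta>"
  shows "cmod (phi_entries l g - 1) < 1 - LB CARD('n) \<delta> l"
proof -
  define N where "N = CARD('n)"
  define \<gamma> where "\<gamma> = real (N * (N + 6)) / 4"
  define M where "M = (\<Sum>k\<in>{1..N}. cmod (shifted_param N l k))"
  define t where "t = polar_height g"
  define r where "r k = ln (iwasawa_entry g (pos_index (k - 1) :: 'n))" for k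
  define w where "w = (\<Sum>k\<in>{1..N}. shifted_param N l k * complex_of_real (r k))"
  have gpos: "\<gamma> > 0" unfolding \<gamma>_def using N2 N_def by simp
  have Mpos: "M > 0" unfolding M_def using sum_cmod_shifted_param_pos N2 Rl N_def by blast
  have rb: "\<bar>r k\<bar> \<le> t" for k unfolding r_def t_def by (rule abs_ln_iwasawa_entry_le[OF dg])
  then have t0: "t \<ge> 0" by (meson abs_ge_zero order_trans)
  have "cmod w \<le> (\<Sum>k\<in>{1..N}. cmod (shifted_param N l k * complex_of_real (r k)))"
    unfolding w_def by (rule norm_sum)
  also have "\<dots> \<le> (\<Sum>k\<in>{1..N}. cmod (shifted_param N l k) * t)"
    by (rule sum_mono) (simp add: norm_mult mult_left_mono rb)
  finally have wM: "cmod w \<le> M * t" unfolding M_def by (simp add: sum_distrib_right)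
  have "\<bar>Re w\<bar> \<le> (\<Sum>k\<in>{1..N}. \<bar>Re (shifted_param N l k) * r k\<bar>)"
    unfolding w_def Re_sum by (simp add: sum_abs)
  also have "\<dots> \<le> (\<Sum>k\<in>{1..N}. \<bar>Re (shifted_param N l k)\<bar> * t)"
    by (rule sum_mono) (simp add: abs_mult mult_left_mono rb)
  also have "\<dots> \<le> \<gamma> * t" unfolding sum_distrib_right[symmetric] \<gamma>_def
    using sum_abs_Re_shifted_param_le[OF Rl[folded N_def]] t0 by (rule mult_right_mono)
  finally have wR: "\<bar>Re w\<bar> \<le> \<gamma> * t" .
  have "cmod (phi_entries l g - 1) \<le> M * (exp (\<gamma> * t) - 1) / \<gamma>"
    unfolding phi_entries_def N_def[symmetric] r_def[symmetric] w_def[symmetric]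
    by (rule exp_minus_one_bound[OF t0 gpos wM wR])
  also have "\<dots> < M * (exp (\<gamma> * \<delta>) - 1) / \<gamma>"
    using ph gpos Mpos by (simp add: t_def divide_strict_right_mono)
  also have "\<dots> = 1 - LB CARD('n) \<delta> l"
    using gpos unfolding LB_def N_def[symmetric] M_def \<gamma>_def shifted_param_def
    by (simp add: field_simps)
  finally show ?thesis .
qed

text \<open>A weighted integral of a positive function against a probability density H is
  positive (otherwise H would vanish almost everywhere).\<close>
lemma integral_weighted_pos:
  fixes H u :: "'a \<Rightarrow> real"
  assumes int: "integrable M (\<lambda>x. H x * u x)" and Hnn: "\<And>x. H x \<ge> 0"
    and H1: "(\<integral>x. H x \<partial>M) = 1" and upos: "\<And>x. H x \<noteq> 0 \<Longrightarrow> u x > 0"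
  shows "(\<integral>x. H x * u x \<partial>M) > 0"
proof -
  have nn: "H x * u x \<ge> 0" for x using Hnn[of x] upos[of x] by (cases "H x = 0") auto
  have "(\<integral>x. H x * u x \<partial>M) \<noteq> 0"
  proof
    assume "(\<integral>x. H x * u x \<partial>M) = 0"
    then have "AE x in M. H x * u x = 0"
      using integral_nonneg_eq_0_iff_AE[OF int] nn by simp
    then have "AE x in M. H x = 0"
    proof eventually_elim
      fix x assume "H x * u x = 0"
      then show "H x = 0" using upos[of x] by (cases "H x = 0") auto
    qed
    then have "(\<integral>x. H x \<partial>M) = 0" by (rule integral_eq_zero_AE)
    then show False using H1 by simp
  qed
  moreover have "(\<integral>x. H x * u x \<partial>M) \<ge> 0" using nn by (simp add: Bochner_Integration.integral_nonneg)
  ultimately show ?thesis by linarith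
qed

lemma integral_density_near_one:
  fixes H :: "'a \<Rightarrow> real" and f :: "'a \<Rightarrow> complex"
  assumes f_meas: "f \<in> borel_measurable M" and Hnn: "\<And>x. H x \<ge> 0"
    and H1: "(\<integral>x. H x \<partial>M) = 1" and close: "\<And>x. H x \<noteq> 0 \<Longrightarrow> cmod (f x - 1) < K"
  shows "cmod (\<integral>x. complex_of_real (H x) * f x \<partial>M) > 1 - K"
proof -
  have intH: "integrable M H" using H1 not_integrable_integral_eq by fastforce
  have bound: "norm (complex_of_real (H x) * (f x - 1)) \<le> H x * K" for x
    using close[of x] Hnn[of x] by (cases "H x = 0") (auto simp: norm_mult intro: mult_left_mono)
  have int_err: "integrable M (\<lambda>x. complex_of_real (H x) * (f x - 1))"
  proof (rule Bochner_Integration.integrable_bound[of _ "\<lambda>x. H x * \<bar>K\<bar>"])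
    show "integrable M (\<lambda>x. H x * \<bar>K\<bar>)" using intH by simp
    show "(\<lambda>x. complex_of_real (H x) * (f x - 1)) \<in> borel_measurable M"
      using borel_measurable_integrable[OF intH] f_meas by measurable
    show "AE x in M. norm (complex_of_real (H x) * (f x - 1)) \<le> norm (H x * \<bar>K\<bar>)"
    proof (rule AE_I2)
      fix x
      have "H x * K \<le> H x * \<bar>K\<bar>" using Hnn[of x] by (intro mult_left_mono) auto
      then show "norm (complex_of_real (H x) * (f x - 1)) \<le> norm (H x * \<bar>K\<bar>)"
        using bound[of x] Hnn[of x] by (simp add: abs_mult)
    qed
  qed
  define E where "E = (\<integral>x. complex_of_real (H x) * (f x - 1) \<partial>M)"
  have "(\<integral>x. complex_of_real (H x) * f x \<partial>M)
      = (\<integral>x. complex_of_real (H x) + complex_of_real (H x) * (f x - 1) \<partial>M)"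
    by (simp add: algebra_simps)
  also have "\<dots> = 1 + E"
    unfolding E_def using intH int_err H1 by (subst Bochner_Integration.integral_add) auto
  finally have split: "(\<integral>x. complex_of_real (H x) * f x \<partial>M) = 1 + E" .
  have int_abs: "integrable M (\<lambda>x. H x * cmod (f x - 1))"
    using integrable_norm[OF int_err] Hnn by (simp add: norm_mult)
  have "cmod E \<le> (\<integral>x. H x * cmod (f x - 1) \<partial>M)"
    unfolding E_def using integral_norm_bound[of M "\<lambda>x. complex_of_real (H x) * (f x - 1)"] Hnn
    by (simp add: norm_mult)
  also have "\<dots> < K"
  proof -
    have "(\<integral>x. H x * (K - cmod (f x - 1)) \<partial>M) > 0"
      using intH int_abs Hnn H1 close
      by (intro integral_weighted_pos) (auto simp: right_diff_distrib)
    moreover have "(\<integral>x. H x * (K - cmod (f x - 1)) \<partial>M) = K - (\<integral>x. H x * cmod (f x - 1) \<partial>M)"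
      using intH int_abs H1 by (simp add: right_diff_distrib)
    ultimately show ?thesis by simp
  qed
  finally have "cmod E < K" .
  moreover have "1 - cmod E \<le> cmod (1 + E)" using norm_triangle_ineq2[of 1 "-E"] by simp
  ultimately show ?thesis unfolding split by linarith
qed

theorem lemma2p3:
  fixes \<mu> :: "('n::{finite,linorder}) sqmat measure"
    and l :: "nat \<Rightarrow> complex" and \<delta> :: real and H :: "'n sqmat \<Rightarrow> real"
  assumes "CARD('n) \<ge> 2"
    and "(\<Sum>j\<in>{1..CARD('n)}. l j) = 0"
    and "\<forall>j\<in>{1..CARD('n)}. \<bar>Re (l j)\<bar> < 1/2"
    and "\<delta> > 0"
    and "LB CARD('n) \<delta> l > 0"
    and "haar_SL \<mu>"
    and "standard_bump \<mu> \<delta> H"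
  shows "cmod (spherical_transform \<mu> H l) > LB CARD('n) \<delta> l"
proof -
  from assms(7) have H0: "\<And>g. g \<notin> SLn \<Longrightarrow> H g = 0"
    and supp: "closure {g \<in> SLn. H g \<noteq> 0} \<subseteq> ball_SL \<delta>"
    and Hnn: "\<And>g. H g \<ge> 0" and H1: "(\<integral>g. H g \<partial>\<mu>) = 1"
    unfolding standard_bump_def by auto
  have near: "det g = 1 \<and> cmod (phi_entries l g - 1) < 1 - LB CARD('n) \<delta> l" if "H g \<noteq> 0" for g
  proof -
    have "g \<in> SLn" using H0 that by blast
    then have "g \<in> closure {g \<in> SLn. H g \<noteq> 0}"
      using that by (intro closure_subset[THEN subsetD]) auto
    then have "g \<in> ball_SL \<delta>" using supp by blast
    then have dg: "det g = 1" and ph: "polar_height g < \<delta>" by (auto simp: ball_SL_def SLn_def)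
    show ?thesis using phi_entries_near_one[OF assms(1,3) dg ph] dg by blast
  qed
  have pointwise: "complex_of_real (H g) * phi l g = complex_of_real (H g) * phi_entries l g" for g
    using near[of g] phi_eq_phi_entries[OF _ assms(2), of g] by (cases "H g = 0") auto
  have "spherical_transform \<mu> H l = (\<integral>g. complex_of_real (H g) * phi_entries l g \<partial>\<mu>)"
    unfolding spherical_transform_def pointwise ..
  moreover have "phi_entries l \<in> borel_measurable \<mu>"
    using assms(6) phi_entries_measurable unfolding haar_SL_def
    by (subst measurable_cong_sets[OF _ refl, where M' = borel]) auto
  then have "cmod (\<integral>g. complex_of_real (H g) * phi_entries l g \<partial>\<mu>) > 1 - (1 - LB CARD('n) \<delta> l)"
    using Hnn H1 near by (intro integral_density_near_one) auto
  ultimately show ?thesis by simp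
qed

end
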